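(* Let $n\ge3$, $k\ge0$. If $S\subseteq\mathrm{Inc}(A,B)$ is a maximal independent set of $G_n^k$ which is not reversible, then $S$ contains a strict alternating cycle of size $3$.
   Context: For integers $n\ge3$, $k\ge0$, the crown $S_n^k$ is the poset with ground set $A\cup B$, $A=\{a_1,\dots,a_{n+k}\}$, $B=\{b_1,\dots,b_{n+k}\}$, indices cyclic modulo $n+k$; elements of $A$ are pairwise incomparable, as are elements of $B$, and $a_i$ is incomparable to $b_j$ when $j\in\{i,\dots,i+k\}$ (mod $n+k$), while $a_i<b_j$ otherwise. $\mathrm{Inc}(A,B)$ is the set of pairs $(a,b)\in A\times B$ with $a$ incomparable to $b$; $G_n^k$ has vertex set $\mathrm{Inc}(A,B)$ with $(a,b)$ adjacent to $(x,y)$ iff $a<y$ and $x<b$. A set $R\subseteq\mathrm{Inc}(A,B)$ is reversible if some linear extension $L$ of $S_n^k$ has $b<a$ in $L$ for all $(a,b)\in R$. An indexed set $\{(x_\alpha,y_\alpha):\alpha\in[m]\}\subseteq\mathrm{Inc}(A,B)$ is an alternating cycle of size $m$ if $x_\alpha\le y_{\alpha-1}$ for all $\alpha$ (indices cyclic mod $m$); it is strict if $x_\alpha\le y_\beta$ holds iff $\beta=\alpha-1$. *)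

theory Defs
  imports Main
begin

(* Elements of the crown S_n^k: A i stands for a_i, B j for b_j,
   with indices taken in {0..<n+k} (cyclic modulo n+k). *)
datatype elem = A nat | B nat

definition ground :: "nat \<Rightarrow> nat \<Rightarrow> elem set" where
  "ground n k = {A i | i. i < n + k} \<union> {B j | j. j < n + k}"

(* a_i is incomparable to b_j iff j \<in> {i, ..., i+k} (mod n+k) *)
definition incomp_idx :: "nat \<Rightarrow> nat \<Rightarrow> nat \<Rightarrow> nat \<Rightarrow> bool" where
  "incomp_idx n k i j \<longleftrightarrow> (j + (n + k) - i) mod (n + k) \<le> k"

definition crown_less :: "nat \<Rightarrow> nat \<Rightarrow> elem \<Rightarrow> elem \<Rightarrow> bool" where
  "crown_less n k x y \<longleftrightarrow>
     (\<exists>i j. x = A i \<and> y = B j \<and> i < n + k \<and> j < n + k \<and> \<not> incomp_idx n k i j)"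

definition crown_le :: "nat \<Rightarrow> nat \<Rightarrow> elem \<Rightarrow> elem \<Rightarrow> bool" where
  "crown_le n k x y \<longleftrightarrow> (x = y \<and> x \<in> ground n k) \<or> crown_less n k x y"

definition Inc :: "nat \<Rightarrow> nat \<Rightarrow> (elem \<times> elem) set" where
  "Inc n k = {(A i, B j) | i j. i < n + k \<and> j < n + k \<and> incomp_idx n k i j}"

definition G_adj :: "nat \<Rightarrow> nat \<Rightarrow> elem \<times> elem \<Rightarrow> elem \<times> elem \<Rightarrow> bool" where
  "G_adj n k p q \<longleftrightarrow> p \<in> Inc n k \<and> q \<in> Inc n k \<and>
     crown_less n k (fst p) (snd q) \<and> crown_less n k (fst q) (snd p)"

definition independent :: "nat \<Rightarrow> nat \<Rightarrow> (elem \<times> elem) set \<Rightarrow> bool" where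
  "independent n k S \<longleftrightarrow> S \<subseteq> Inc n k \<and> (\<forall>p\<in>S. \<forall>q\<in>S. \<not> G_adj n k p q)"

definition maximal_independent :: "nat \<Rightarrow> nat \<Rightarrow> (elem \<times> elem) set \<Rightarrow> bool" where
  "maximal_independent n k S \<longleftrightarrow> independent n k S \<and>
     (\<forall>T. independent n k T \<and> S \<subseteq> T \<longrightarrow> T = S)"

definition linear_extension :: "nat \<Rightarrow> nat \<Rightarrow> elem rel \<Rightarrow> bool" where
  "linear_extension n k L \<longleftrightarrow> L \<subseteq> ground n k \<times> ground n k \<and>
     linear_order_on (ground n k) L \<and>
     (\<forall>x y. crown_le n k x y \<longrightarrow> (x, y) \<in> L)"

definition reversible :: "nat \<Rightarrow> nat \<Rightarrow> (elem \<times> elem) set \<Rightarrow> bool" where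
  "reversible n k R \<longleftrightarrow> R \<subseteq> Inc n k \<and>
     (\<exists>L. linear_extension n k L \<and> (\<forall>(a, b)\<in>R. (b, a) \<in> L \<and> b \<noteq> a))"

(* indexed family c 0, ..., c (m-1) of pairs in Inc(A,B); indices cyclic mod m *)
definition alternating_cycle :: "nat \<Rightarrow> nat \<Rightarrow> nat \<Rightarrow> (nat \<Rightarrow> elem \<times> elem) \<Rightarrow> bool" where
  "alternating_cycle n k m c \<longleftrightarrow> 0 < m \<and> inj_on c {0..<m} \<and>
     (\<forall>\<alpha><m. c \<alpha> \<in> Inc n k) \<and>
     (\<forall>\<alpha><m. crown_le n k (fst (c \<alpha>)) (snd (c ((\<alpha> + m - 1) mod m))))"

definition strict_alternating_cycle :: "nat \<Rightarrow> nat \<Rightarrow> nat \<Rightarrow> (nat \<Rightarrow> elem \<times> elem) \<Rightarrow> bool" where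
  "strict_alternating_cycle n k m c \<longleftrightarrow> alternating_cycle n k m c \<and>
     (\<forall>\<alpha><m. \<forall>\<beta><m. crown_le n k (fst (c \<alpha>)) (snd (c \<beta>)) \<longleftrightarrow> \<beta> = (\<alpha> + m - 1) mod m)"

end

theory Submission
  imports Defs "HOL-Library.Product_Lexorder"
begin

(* Let p \<rightarrow> q (alternating_rel) on S mean a_p < b_q, so that alternating cycles in S are
   the cycles of \<rightarrow>. If \<rightarrow> is acyclic, then so is the crown order together with the reversed
   pairs b < a for (a, b) \<in> S, and any linear extension of this relation on the finite ground
   set reverses S. Otherwise take a shortest cycle of \<rightarrow>. It has no loops (pairs in Inc(A,B)
   are incomparable) and no 2-cycles (S is independent in G). If it has consecutive pairs
   p0, p1, p2, p3, look at t = (a_p0, b_p3): either a_p0 < b_p3, or t \<in> S and t \<rightarrow> p1 \<rightarrow> p2 \<rightarrow> t,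
   or by maximality some s \<in> S is adjacent to t in G, i.e. p0 \<rightarrow> s \<rightarrow> p3. Each case gives a
   shorter cycle, so the shortest one has length 3, and a 3-cycle of \<rightarrow> in an independent set
   is strict. *)

lemma linear_order_on_inj_key:
  fixes h :: "'a \<Rightarrow> 'b::linorder"
  assumes "inj_on h X"
  shows "linear_order_on X {(x, y). x \<in> X \<and> y \<in> X \<and> h x \<le> h y}"
  using assms
  unfolding linear_order_on_def partial_order_on_def preorder_on_def refl_on_def
    trans_def antisym_def total_on_def inj_on_def
  by (auto intro: order_trans)

lemma finite_acyclic_linear_extension:
  assumes "finite X" and "r \<subseteq> X \<times> X" and "acyclic r"
  obtains L where "linear_order_on X L" and "L \<subseteq> X \<times> X" and "r \<subseteq> L"
proof -
  define rank where "rank x = card {z. (z, x) \<in> r\<^sup>+}" for x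
  have rank_less: "rank x < rank y" if "(x, y) \<in> r" for x y
  proof -
    have "{z. (z, x) \<in> r\<^sup>+} \<subset> {z. (z, y) \<in> r\<^sup>+}"
      using that \<open>acyclic r\<close> unfolding acyclic_def by (blast intro: trancl_into_trancl)
    moreover have "finite {z. (z, y) \<in> r\<^sup>+}"
      using \<open>finite X\<close> trancl_subset_Sigma[OF \<open>r \<subseteq> X \<times> X\<close>]
      by (blast intro: finite_subset)
    ultimately show ?thesis
      unfolding rank_def by (simp add: psubset_card_mono)
  qed
  obtain g :: "'a \<Rightarrow> nat" where "inj_on g X"
    using finite_imp_inj_to_nat_seg[OF \<open>finite X\<close>] by blast
  then have "inj_on (\<lambda>x. (rank x, g x)) X"
    by (simp add: inj_on_def)
  then show ?thesis
    using that linear_order_on_inj_key \<open>r \<subseteq> X \<times> X\<close> rank_less by fastforce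
qed

lemma relpow_3_cycle_if_chords:
  assumes cycle: "(x, x) \<in> r\<^sup>+"
    and irrefl: "\<And>x. (x, x) \<notin> r"
    and asym: "\<And>x y. (x, y) \<in> r \<Longrightarrow> (y, x) \<notin> r"
    and chord: "\<And>w x y z. (w, x) \<in> r \<Longrightarrow> (x, y) \<in> r \<Longrightarrow> (y, z) \<in> r \<Longrightarrow>
      (w, z) \<in> r \<union> r O r \<or> (\<exists>t. (t, t) \<in> r ^^ 3)"
  shows "\<exists>t. (t, t) \<in> r ^^ 3"
proof -
  have "\<exists>t. (t, t) \<in> r ^^ 3" if "(x, x) \<in> r ^^ m" "0 < m" for m x
    using that
  proof (induction m arbitrary: x rule: less_induct)
    case (less m)
    consider (one) "m = 1" | (two) "m = 2" | (three) "m = 3"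
      | (long) "m = Suc (Suc (Suc (m - 3)))" "0 < m - 3"
      using \<open>0 < m\<close> by linarith
    then show ?case
    proof cases
      case one
      with less.prems irrefl show ?thesis by simp
    next
      case two
      with less.prems(1) obtain y where "(x, y) \<in> r" "(y, x) \<in> r"
        by (auto simp: numeral_2_eq_2 elim!: relpow_Suc_E2)
      with asym show ?thesis by blast
    next
      case three
      with less.prems show ?thesis by blast
    next
      case long
      define j where "j = m - 3"
      have shorter: "Suc j < m" "Suc (Suc j) < m"
        using long unfolding j_def by linarith+
      from less.prems(1) long have "(x, x) \<in> r ^^ Suc (Suc (Suc j))"
        unfolding j_def by simp
      then obtain x1 x2 x3 where "(x, x1) \<in> r" "(x1, x2) \<in> r" "(x2, x3) \<in> r"
        and closing: "(x3, x) \<in> r ^^ j"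
        by (meson relpow_Suc_E2)
      then consider (edge) "(x, x3) \<in> r" | (path) "(x, x3) \<in> r O r" | "\<exists>t. (t, t) \<in> r ^^ 3"
        using chord by blast
      then show ?thesis
      proof cases
        case edge
        then have "(x, x) \<in> r ^^ Suc j"
          using closing by (rule relpow_Suc_I2)
        with less.IH shorter show ?thesis by blast
      next
        case path
        then obtain y where "(x, y) \<in> r" "(y, x3) \<in> r"
          by blast
        then have "(x, x) \<in> r ^^ Suc (Suc j)"
          using closing by (blast intro: relpow_Suc_I2)
        with less.IH shorter show ?thesis by blast
      qed
    qed
  qed
  with cycle show ?thesis
    by (auto simp: trancl_power)
qed

lemma not_crown_less_A [simp]: "\<not> crown_less n k x (A i)"
  and not_crown_less_B [simp]: "\<not> crown_less n k (B j) y"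
  unfolding crown_less_def by auto

lemma crown_less_ground: "crown_less n k x y \<Longrightarrow> x \<in> ground n k \<and> y \<in> ground n k"
  unfolding crown_less_def ground_def by auto

lemma finite_ground: "finite (ground n k)"
proof -
  have "ground n k = A ` {..<n + k} \<union> B ` {..<n + k}"
    unfolding ground_def by auto
  then show ?thesis by simp
qed

lemma IncE:
  assumes "p \<in> Inc n k"
  obtains i j where "p = (A i, B j)" and "i < n + k" and "j < n + k"
    and "\<not> crown_less n k (A i) (B j)"
  using assms unfolding Inc_def crown_less_def by auto

lemma Inc_ground: "p \<in> Inc n k \<Longrightarrow> fst p \<in> ground n k \<and> snd p \<in> ground n k"
  unfolding Inc_def ground_def by auto

lemma Inc_fst_neq_snd: "p \<in> Inc n k \<Longrightarrow> q \<in> Inc n k \<Longrightarrow> fst p \<noteq> snd q"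
  by (auto elim!: IncE)

lemma crown_le_Inc_iff:
  "p \<in> Inc n k \<Longrightarrow> q \<in> Inc n k \<Longrightarrow> crown_le n k (fst p) (snd q) \<longleftrightarrow> crown_less n k (fst p) (snd q)"
  unfolding crown_le_def by (auto elim!: IncE)

definition alternating_rel :: "nat \<Rightarrow> nat \<Rightarrow> (elem \<times> elem) set \<Rightarrow> (elem \<times> elem) rel" where
  "alternating_rel n k S = {(p, q). p \<in> S \<and> q \<in> S \<and> crown_less n k (fst p) (snd q)}"

definition reversal_rel :: "nat \<Rightarrow> nat \<Rightarrow> (elem \<times> elem) set \<Rightarrow> elem rel" where
  "reversal_rel n k S = {(x, y). crown_less n k x y} \<union> {(b, a). (a, b) \<in> S}"

lemma reversal_rel_trancl_cases:
  assumes "(u, v) \<in> (reversal_rel n k S)\<^sup>+" and "S \<subseteq> Inc n k"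
  shows "crown_less n k u v \<or>
    (\<exists>p\<in>S. \<exists>q\<in>S. (p, q) \<in> (alternating_rel n k S)\<^sup>* \<and>
       (u = snd p \<or> crown_less n k u (snd p)) \<and> (v = fst q \<or> crown_less n k (fst q) v))"
  using assms(1)
proof (induction rule: trancl_induct)
  case (base v)
  then consider "crown_less n k u v" | "(v, u) \<in> S"
    unfolding reversal_rel_def by auto
  then show ?case by cases force+
next
  case (step y z)
  from step.hyps(2) consider (order) "crown_less n k y z"
    | (reversed) r where "r \<in> S" "y = snd r" "z = fst r"
    unfolding reversal_rel_def by auto
  then show ?case
  proof cases
    case order
    then obtain i where "y = A i"
      unfolding crown_less_def by blast
    with step.IH obtain p q where "p \<in> S" "q \<in> S" "(p, q) \<in> (alternating_rel n k S)\<^sup>*"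
      "u = snd p \<or> crown_less n k u (snd p)" "y = fst q"
      by auto
    with order show ?thesis by blast
  next
    case (reversed r)
    from step.IH consider (direct) "crown_less n k u y"
      | (path) p q where "p \<in> S" "q \<in> S" "(p, q) \<in> (alternating_rel n k S)\<^sup>*"
        "u = snd p \<or> crown_less n k u (snd p)" "y = fst q \<or> crown_less n k (fst q) y"
      by blast
    then show ?thesis
    proof cases
      case direct
      with reversed show ?thesis by auto
    next
      case (path p q)
      have "fst q \<noteq> snd r"
        using path(2) reversed(1) assms(2) by (blast dest: Inc_fst_neq_snd)
      with path(5) reversed(2) have "crown_less n k (fst q) (snd r)"
        by simp
      with path(2) reversed(1) have "(q, r) \<in> alternating_rel n k S"
        unfolding alternating_rel_def by simp
      with path reversed show ?thesis
        by (auto intro: rtrancl_into_rtrancl)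
    qed
  qed
qed

lemma acyclic_reversal_rel:
  assumes "S \<subseteq> Inc n k" and "acyclic (alternating_rel n k S)"
  shows "acyclic (reversal_rel n k S)"
proof (rule acyclicI, intro allI notI)
  fix x assume "(x, x) \<in> (reversal_rel n k S)\<^sup>+"
  moreover have "\<not> crown_less n k x x"
    by (cases x) simp_all
  ultimately obtain p q where "p \<in> S" "q \<in> S" and pq: "(p, q) \<in> (alternating_rel n k S)\<^sup>*"
    and "x = snd p \<or> crown_less n k x (snd p)" "x = fst q \<or> crown_less n k (fst q) x"
    using reversal_rel_trancl_cases assms(1) by blast
  moreover have "fst p \<noteq> snd q" "fst q \<noteq> snd p"
    using \<open>p \<in> S\<close> \<open>q \<in> S\<close> assms(1) by (blast dest: Inc_fst_neq_snd)+
  ultimately have "crown_less n k (fst q) (snd p)"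
    by (cases x) auto
  with \<open>p \<in> S\<close> \<open>q \<in> S\<close> have "(q, p) \<in> alternating_rel n k S"
    unfolding alternating_rel_def by simp
  with pq have "(p, p) \<in> (alternating_rel n k S)\<^sup>+"
    by (rule rtrancl_into_trancl1)
  with assms(2) show False
    unfolding acyclic_def by blast
qed

lemma reversible_if_acyclic_alternating_rel:
  assumes S: "S \<subseteq> Inc n k" and acyclic: "acyclic (alternating_rel n k S)"
  shows "reversible n k S"
proof -
  have "reversal_rel n k S \<subseteq> ground n k \<times> ground n k"
    using S crown_less_ground Inc_ground unfolding reversal_rel_def by fastforce
  then obtain L where L: "linear_order_on (ground n k) L" "L \<subseteq> ground n k \<times> ground n k"
    and reversal_L: "reversal_rel n k S \<subseteq> L"
    using finite_acyclic_linear_extension finite_ground acyclic_reversal_rel[OF S acyclic]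
    by metis
  have "linear_extension n k L"
    unfolding linear_extension_def
  proof (intro conjI allI impI L)
    fix x y assume "crown_le n k x y"
    with L(1) reversal_L show "(x, y) \<in> L"
      unfolding crown_le_def reversal_rel_def linear_order_on_def partial_order_on_def
        preorder_on_def refl_on_def
      by blast
  qed
  moreover have "(b, a) \<in> L \<and> b \<noteq> a" if "(a, b) \<in> S" for a b
    using that S reversal_L unfolding reversal_rel_def by (fastforce elim!: IncE)
  ultimately show ?thesis
    unfolding reversible_def using S by blast
qed

lemma alternating_rel_irrefl: "S \<subseteq> Inc n k \<Longrightarrow> (p, p) \<notin> alternating_rel n k S"
  unfolding alternating_rel_def by (auto elim!: IncE)

lemma alternating_rel_asym:
  "independent n k S \<Longrightarrow> (p, q) \<in> alternating_rel n k S \<Longrightarrow> (q, p) \<notin> alternating_rel n k S"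
  unfolding independent_def alternating_rel_def G_adj_def by blast

lemma maximal_independent_conflict:
  assumes "maximal_independent n k S" and "t \<in> Inc n k" and "t \<notin> S"
  obtains s where "s \<in> S" and "crown_less n k (fst s) (snd t)" and "crown_less n k (fst t) (snd s)"
proof -
  have S: "independent n k S"
    using assms(1) unfolding maximal_independent_def by blast
  have "\<not> independent n k (insert t S)"
    using assms unfolding maximal_independent_def by blast
  moreover have "\<not> G_adj n k t t"
    using assms(2) unfolding G_adj_def by (auto elim!: IncE)
  ultimately obtain s where "s \<in> S" "G_adj n k s t \<or> G_adj n k t s"
    using S assms(2) unfolding independent_def by blast
  then show ?thesis
    using that unfolding G_adj_def by blast
qed

lemma alternating_rel_chord:
  assumes S: "maximal_independent n k S"
    and "(p0, p1) \<in> alternating_rel n k S" "(p1, p2) \<in> alternating_rel n k S"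
      "(p2, p3) \<in> alternating_rel n k S"
  shows "(p0, p3) \<in> alternating_rel n k S \<union> alternating_rel n k S O alternating_rel n k S
    \<or> (\<exists>t. (t, t) \<in> alternating_rel n k S ^^ 3)"
proof (cases "crown_less n k (fst p0) (snd p3)")
  case True
  with assms show ?thesis
    unfolding alternating_rel_def by simp
next
  case False
  define t where "t = (fst p0, snd p3)"
  have "p0 \<in> Inc n k" "p3 \<in> Inc n k"
    using assms unfolding maximal_independent_def independent_def alternating_rel_def by auto
  with False have t: "t \<in> Inc n k"
    unfolding t_def Inc_def crown_less_def by (auto elim!: IncE)
  show ?thesis
  proof (cases "t \<in> S")
    case True
    with assms have "(t, p1) \<in> alternating_rel n k S" "(p2, t) \<in> alternating_rel n k S"
      unfolding alternating_rel_def t_def by auto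
    with assms(3) have "(t, t) \<in> alternating_rel n k S ^^ 3"
      by (auto simp: numeral_3_eq_3)
    then show ?thesis by blast
  next
    case False
    with S t obtain s where "s \<in> S" "crown_less n k (fst s) (snd t)" "crown_less n k (fst t) (snd s)"
      by (rule maximal_independent_conflict)
    with assms have "(p0, s) \<in> alternating_rel n k S" "(s, p3) \<in> alternating_rel n k S"
      unfolding alternating_rel_def t_def by auto
    then show ?thesis by blast
  qed
qed

lemma strict_alternating_cycle_if_triangle:
  assumes S: "independent n k S" and "(d0, d0) \<in> alternating_rel n k S ^^ 3"
  shows "\<exists>c. strict_alternating_cycle n k 3 c \<and> (\<forall>\<alpha><3. c \<alpha> \<in> S)"
proof -
  obtain d1 d2 where edges: "(d0, d1) \<in> alternating_rel n k S" "(d1, d2) \<in> alternating_rel n k S"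
    "(d2, d0) \<in> alternating_rel n k S"
    using assms(2) by (auto simp: numeral_3_eq_3 elim!: relpow_Suc_E2)
  then have in_S: "d0 \<in> S" "d1 \<in> S" "d2 \<in> S"
    unfolding alternating_rel_def by auto
  have "S \<subseteq> Inc n k"
    using S unfolding independent_def by blast
  with in_S have edge_iff: "crown_le n k (fst p) (snd q) \<longleftrightarrow> (p, q) \<in> alternating_rel n k S"
    if "p \<in> {d0, d1, d2}" "q \<in> {d0, d1, d2}" for p q
    using that crown_le_Inc_iff unfolding alternating_rel_def by blast
  have non_edges: "(d1, d0) \<notin> alternating_rel n k S" "(d2, d1) \<notin> alternating_rel n k S"
    "(d0, d2) \<notin> alternating_rel n k S"
    using edges alternating_rel_asym[OF S] by blast+
  have loops: "(d, d) \<notin> alternating_rel n k S" for d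
    using \<open>S \<subseteq> Inc n k\<close> by (rule alternating_rel_irrefl)
  have all3: "(\<forall>\<alpha><3. P \<alpha>) \<longleftrightarrow> P 0 \<and> P (Suc 0) \<and> P (Suc (Suc 0))" for P
    by (auto simp: numeral_3_eq_3 less_Suc_eq)
  define c where "c \<alpha> = [d0, d2, d1] ! \<alpha>" for \<alpha>
  have c_simps: "c 0 = d0" "c (Suc 0) = d2" "c (Suc (Suc 0)) = d1"
    by (simp_all add: c_def)
  have "d0 \<noteq> d1" "d1 \<noteq> d2" "d2 \<noteq> d0"
    using edges loops[of d0] loops[of d1] loops[of d2] by auto
  then have "inj_on c {0..<3}"
    by (simp add: atLeast0_lessThan_Suc numeral_3_eq_3 c_simps)
  moreover have "\<forall>\<alpha><3. c \<alpha> \<in> Inc n k"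
    using in_S \<open>S \<subseteq> Inc n k\<close> by (auto simp: all3 c_simps)
  moreover have "\<forall>\<alpha><3. crown_le n k (fst (c \<alpha>)) (snd (c ((\<alpha> + 3 - 1) mod 3)))"
    using edges by (simp add: all3 c_simps edge_iff)
  moreover have "\<forall>\<alpha><3. \<forall>\<beta><3. crown_le n k (fst (c \<alpha>)) (snd (c \<beta>)) \<longleftrightarrow> \<beta> = (\<alpha> + 3 - 1) mod 3"
    using edges non_edges loops by (simp add: all3 c_simps edge_iff)
  ultimately have "strict_alternating_cycle n k 3 c"
    unfolding strict_alternating_cycle_def alternating_cycle_def by simp
  moreover have "\<forall>\<alpha><3. c \<alpha> \<in> S"
    using in_S by (simp add: all3 c_simps)
  ultimately show ?thesis by blast
qed

theorem lemma4p5: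
  fixes n k :: nat and S :: "(elem \<times> elem) set"
  assumes "n \<ge> 3"
    and "maximal_independent n k S"
    and "\<not> reversible n k S"
  shows "\<exists>c. strict_alternating_cycle n k 3 c \<and> (\<forall>\<alpha><3. c \<alpha> \<in> S)"
proof -
  have S: "independent n k S" "S \<subseteq> Inc n k"
    using assms(2) unfolding maximal_independent_def independent_def by blast+
  with assms(3) obtain p where "(p, p) \<in> (alternating_rel n k S)\<^sup>+"
    using reversible_if_acyclic_alternating_rel unfolding acyclic_def by blast
  then obtain d where "(d, d) \<in> alternating_rel n k S ^^ 3"
    using relpow_3_cycle_if_chords alternating_rel_irrefl[OF S(2)] alternating_rel_asym[OF S(1)]
      alternating_rel_chord[OF assms(2)]
    by metis
  with S(1) show ?thesis
    by (rule strict_alternating_cycle_if_triangle)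
qed

end
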